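(* $\mathfrak{b}\leq\mathfrak{a}(\mathcal{BI})$.
   Context: $\mathcal{F}in\times\mathcal{F}in$ is the ideal on $\omega\times\omega$ consisting of those $A$ such that for all but finitely many $n\in\omega$ the set $\{m:(n,m)\in A\}$ is finite. The Boring ideal $\mathcal{BI}$ is the ideal on $\omega^{3}$ consisting of those $A\subseteq\omega^{3}$ such that for every $n\in\omega$ the set $\{(j,k):(n,j,k)\in A\}$ belongs to $\mathcal{F}in\times\mathcal{F}in$, and for all but finitely many $n\in\omega$ the set $A\cap(\{n\}\times\omega^{2})$ is finite. For an ideal $\mathcal{J}$ on a countable set, $\mathfrak{a}(\mathcal{J})$ is the smallest size of an uncountable family $\mathcal{A}$ of $\mathcal{J}$-positive sets (sets not in $\mathcal{J}$) which is maximal with respect to the property that $A\cap B\in\mathcal{J}$ for all distinct $A,B\in\mathcal{A}$. $\mathfrak{b}$ is the bounding number. *)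

theory Defs
  imports Main "HOL-Library.Countable_Set"
begin

definition FinFin :: "(nat \<times> nat) set set" where
  "FinFin = {A. finite {n. infinite {m. (n, m) \<in> A}}}"

definition BI :: "(nat \<times> nat \<times> nat) set set" where
  "BI = {A. (\<forall>n. {(j, k). (n, j, k) \<in> A} \<in> FinFin) \<and>
            finite {n. infinite (A \<inter> ({n} \<times> UNIV))}}"

definition ad_family :: "'a set set \<Rightarrow> 'a set set \<Rightarrow> bool" where
  "ad_family J \<A> \<longleftrightarrow> (\<forall>A\<in>\<A>. A \<notin> J) \<and> (\<forall>A\<in>\<A>. \<forall>B\<in>\<A>. A \<noteq> B \<longrightarrow> A \<inter> B \<in> J)"

definition mad_family :: "'a set set \<Rightarrow> 'a set set \<Rightarrow> bool" where
  "mad_family J \<A> \<longleftrightarrow> ad_family J \<A> \<and> (\<forall>X. X \<notin> \<A> \<longrightarrow> \<not> ad_family J (insert X \<A>))"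

definition le_star :: "(nat \<Rightarrow> nat) \<Rightarrow> (nat \<Rightarrow> nat) \<Rightarrow> bool" where
  "le_star f g \<longleftrightarrow> finite {n. g n < f n}"

definition unbounded_family :: "(nat \<Rightarrow> nat) set \<Rightarrow> bool" where
  "unbounded_family F \<longleftrightarrow> \<not> (\<exists>g. \<forall>f\<in>F. le_star f g)"

definition card_le :: "'a set \<Rightarrow> 'b set \<Rightarrow> bool" where
  "card_le X Y \<longleftrightarrow> (\<exists>h. inj_on h X \<and> h ` X \<subseteq> Y)"

end

theory Submission
  imports Defs
begin

text \<open>
  A BI-positive set A has either infinitely many infinite slices A``{m}, or some slice A``{c}
  with infinitely many infinite rows (A``{c})``{j}. An uncountable MAD family therefore
  contains a sequence of distinct members A k all positive in the same way. Each member B is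
  sent to the function whose value at k bounds the indices of the infinite relevant rows of
  A k \<inter> B. If some g dominated all these functions, then picking for each k an infinite
  relevant row of A k with index above g k and gluing these rows together would give a
  BI-positive set almost disjoint from every member of the family, contradicting maximality.
\<close>

lemma Int_Image_singleton: "(R \<inter> S) `` {a} = R `` {a} \<inter> S `` {a}"
  by auto

lemma FinFin_iff: "S \<in> FinFin \<longleftrightarrow> finite {j. infinite (S `` {j})}"
  by (simp add: FinFin_def Image_singleton)

lemma BI_iff: "A \<in> BI \<longleftrightarrow> (\<forall>n. A `` {n} \<in> FinFin) \<and> finite {n. infinite (A `` {n})}"
proof -
  have "A \<inter> ({n} \<times> UNIV) = Pair n ` (A `` {n})" for n
    by auto
  then have "infinite (A \<inter> ({n} \<times> UNIV)) \<longleftrightarrow> infinite (A `` {n})" for n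
    by (simp add: finite_image_iff inj_on_def)
  moreover have "{(j, k). (n, j, k) \<in> A} = A `` {n}" for n
    by auto
  ultimately show ?thesis
    unfolding BI_def by simp
qed

lemma FinFin_subset: "S \<in> FinFin \<Longrightarrow> T \<subseteq> S \<Longrightarrow> T \<in> FinFin"
  unfolding FinFin_iff by (rule finite_subset[rotated]) (auto dest: finite_subset[OF Image_mono])

lemma empty_in_FinFin: "{} \<in> FinFin"
  by (simp add: FinFin_iff)

lemma infinite_FinFin_subset:
  assumes "infinite S"
  obtains T where "T \<subseteq> S" "infinite T" "T \<in> FinFin"
proof (cases "\<exists>j. infinite (S `` {j})")
  case True
  then obtain j where j: "infinite (S `` {j})"
    by blast
  let ?T = "{j} \<times> S `` {j}"
  have "infinite ?T"
    using j by (auto simp: finite_cartesian_product_iff)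
  moreover have "{i. infinite (?T `` {i})} \<subseteq> {j}"
    by (auto simp: Image_singleton)
  then have "?T \<in> FinFin"
    unfolding FinFin_iff by (rule finite_subset) simp
  moreover have "?T \<subseteq> S"
    by auto
  ultimately show ?thesis
    using that by blast
next
  case False
  then have "S \<in> FinFin"
    by (simp add: FinFin_iff)
  with assms that show ?thesis
    by blast
qed

lemma infinite_rows_along_inj:
  fixes n :: "nat \<Rightarrow> 'a"
  assumes "inj n" and "\<And>k. infinite (R (n k))"
  shows "infinite {m. infinite (R m)}"
proof -
  have "range n \<subseteq> {m. infinite (R m)}"
    using assms(2) by auto
  then show ?thesis
    using range_inj_infinite[OF assms(1)] finite_subset by blast
qed

lemma finite_infinite_rows_along:
  assumes "finite {k. infinite (P k)}"
    and "\<And>k. R (n k) \<subseteq> P k" and "\<And>m. m \<notin> range n \<Longrightarrow> R m = {}"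
  shows "finite {m. infinite (R m)}"
proof -
  have "{m. infinite (R m)} \<subseteq> n ` {k. infinite (P k)}"
    using assms(2,3) by (fastforce dest: finite_subset)
  then show ?thesis
    using assms(1) by (rule finite_subset[OF _ finite_imageI])
qed

lemma strict_mono_choice_above:
  fixes P :: "nat \<Rightarrow> nat \<Rightarrow> bool" and L :: "nat \<Rightarrow> nat"
  assumes "\<And>k. infinite {m. P k m}"
  obtains n where "strict_mono n" "\<And>k. P k (n k)" "\<And>k. L k < n k"
proof -
  have "\<exists>y. P k y \<and> L k < y \<and> x < y" for k x
  proof -
    obtain y where "L k + x < y" "P k y"
      using assms[of k] unfolding infinite_nat_iff_unbounded by blast
    then show ?thesis
      by auto
  qed
  then have "\<exists>n. \<forall>k. (P k (n k) \<and> L k < n k) \<and> n k < n (Suc k)"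
    by (intro dependent_nat_choice) blast+
  then show ?thesis
    using that by (auto simp: strict_mono_Suc_iff)
qed

lemma mad_family_maximal:
  assumes "mad_family J \<A>" and "X \<notin> J"
  shows "\<exists>Y\<in>\<A>. X \<inter> Y \<notin> J"
proof (rule ccontr)
  assume "\<not> ?thesis"
  then have XY: "\<forall>Y\<in>\<A>. X \<inter> Y \<in> J"
    by blast
  then have "X \<notin> \<A>"
    using assms(2) by fastforce
  moreover have "ad_family J (insert X \<A>)"
    using assms XY unfolding mad_family_def ad_family_def by (auto simp: Int_commute)
  ultimately show False
    using assms(1) by (simp add: mad_family_def)
qed

lemma card_le_image: "card_le (f ` \<A>) \<A>"
  unfolding card_le_def by (auto intro!: exI[of _ "inv_into \<A> f"] inj_on_inv_into inv_into_into)

text \<open>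
  Here \<rho> Z m plays the role of the m-th row of Z, and \<open>diagonal\<close> is the ideal-specific
  step: infinite rows of the A k at distinct indices glue to a J-positive set.
\<close>

lemma unbounded_family_le_mad_family:
  fixes \<rho> :: "'a set \<Rightarrow> nat \<Rightarrow> 'b set" and A :: "nat \<Rightarrow> 'a set"
  assumes mad: "mad_family J \<A>" and A: "inj A" "range A \<subseteq> \<A>"
    and rows_J: "\<And>Z. Z \<in> J \<Longrightarrow> finite {m. infinite (\<rho> Z m)}"
    and rows_A: "\<And>k. infinite {m. infinite (\<rho> (A k) m)}"
    and diagonal: "\<And>n. inj n \<Longrightarrow> (\<And>k. infinite (\<rho> (A k) (n k))) \<Longrightarrow>
      \<exists>X. X \<notin> J \<and> (\<forall>Y. finite {k. infinite (\<rho> (A k \<inter> Y) (n k))} \<longrightarrow> X \<inter> Y \<in> J)"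
  shows "\<exists>F. unbounded_family F \<and> card_le F \<A>"
proof -
  define bound where "bound Z = Suc (Max {m. infinite (\<rho> Z m)})" for Z
  have bound: "finite (\<rho> Z m)" if "Z \<in> J" "bound Z \<le> m" for Z m
    using that rows_J[OF that(1)] Max_ge[of "{m. infinite (\<rho> Z m)}" m]
    by (fastforce simp: bound_def)
  have "unbounded_family ((\<lambda>B k. bound (A k \<inter> B)) ` \<A>)"
    unfolding unbounded_family_def
  proof
    assume "\<exists>g. \<forall>f \<in> (\<lambda>B k. bound (A k \<inter> B)) ` \<A>. le_star f g"
    then obtain g where g: "\<And>B. B \<in> \<A> \<Longrightarrow> finite {k. g k < bound (A k \<inter> B)}"
      by (auto simp: le_star_def)
    obtain n where n: "strict_mono n" "\<And>k. infinite (\<rho> (A k) (n k))" "\<And>k. g k < n k"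
      using rows_A
      by (rule strict_mono_choice_above[where P = "\<lambda>k m. infinite (\<rho> (A k) m)" and L = g]) blast
    obtain X where "X \<notin> J"
      and X: "\<And>Y. finite {k. infinite (\<rho> (A k \<inter> Y) (n k))} \<Longrightarrow> X \<inter> Y \<in> J"
      using diagonal[OF strict_mono_imp_inj_on[OF n(1)] n(2)] by blast
    then obtain Y where Y: "Y \<in> \<A>" "X \<inter> Y \<notin> J"
      using mad_family_maximal[OF mad] by blast
    have AY: "A k \<inter> Y \<in> J" if "A k \<noteq> Y" for k
      using mad A(2) Y(1) that unfolding mad_family_def ad_family_def by blast
    have "A k = Y \<or> g k < bound (A k \<inter> Y)" if "infinite (\<rho> (A k \<inter> Y) (n k))" for k
    proof (rule ccontr)
      assume "\<not> (A k = Y \<or> g k < bound (A k \<inter> Y))"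
      then have "A k \<inter> Y \<in> J" "bound (A k \<inter> Y) \<le> n k"
        using AY n(3)[of k] by auto
      then show False
        using bound that by blast
    qed
    then have "{k. infinite (\<rho> (A k \<inter> Y) (n k))} \<subseteq> {k. A k = Y} \<union> {k. g k < bound (A k \<inter> Y)}"
      by blast
    moreover have "finite {k. A k = Y}"
      using finite_vimage_IntI[of "{Y}" A UNIV] A(1) by (simp add: vimage_def)
    ultimately show False
      using X Y g by (meson finite_UnI finite_subset)
  qed
  then show ?thesis
    using card_le_image by blast
qed

lemma BI_diagonal_slices:
  fixes A :: "nat \<Rightarrow> (nat \<times> nat \<times> nat) set"
  assumes n: "inj n" and infinite_slices: "\<And>k. infinite (A k `` {n k})"
  shows "\<exists>X. X \<notin> BI \<and> (\<forall>Y. finite {k. infinite ((A k \<inter> Y) `` {n k})} \<longrightarrow> X \<inter> Y \<in> BI)"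
proof -
  \<comment> \<open>The slices of A k need not lie in FinFin, so only FinFin parts of them are glued.\<close>
  have "\<exists>T. T \<subseteq> A k `` {n k} \<and> infinite T \<and> T \<in> FinFin" for k
    using infinite_FinFin_subset[OF infinite_slices[of k]] by blast
  then obtain S where S: "\<And>k. S k \<subseteq> A k `` {n k}" "\<And>k. infinite (S k)" "\<And>k. S k \<in> FinFin"
    by metis
  define X where "X = (\<Union>k. {n k} \<times> S k)"
  have X_on: "X `` {n k} = S k" for k
    using n unfolding X_def by (auto dest: injD)
  have X_off: "X `` {m} = {}" if "m \<notin> range n" for m
    using that unfolding X_def by auto
  have X_FinFin: "X `` {m} \<in> FinFin" for m
    using X_on X_off S(3) empty_in_FinFin by (cases "m \<in> range n") auto
  have "X \<notin> BI"
    using infinite_rows_along_inj[OF n, of "\<lambda>m. X `` {m}"] X_on S(2) by (simp add: BI_iff)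
  moreover have "X \<inter> Y \<in> BI" if Y: "finite {k. infinite ((A k \<inter> Y) `` {n k})}" for Y
  proof -
    have "(X \<inter> Y) `` {m} \<in> FinFin" for m
      by (rule FinFin_subset[OF X_FinFin]) auto
    moreover have "finite {m. infinite ((X \<inter> Y) `` {m})}"
    proof (rule finite_infinite_rows_along[OF Y])
      show "(X \<inter> Y) `` {n k} \<subseteq> (A k \<inter> Y) `` {n k}" for k
        using S(1) by (auto simp: Int_Image_singleton X_on)
      show "(X \<inter> Y) `` {m} = {}" if "m \<notin> range n" for m
        using X_off[OF that] by auto
    qed
    ultimately show ?thesis
      by (simp add: BI_iff)
  qed
  ultimately show ?thesis
    by blast
qed

lemma BI_diagonal_rows:
  fixes A :: "nat \<Rightarrow> (nat \<times> nat \<times> nat) set"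
  assumes n: "inj n" and infinite_rows: "\<And>k. infinite ((A k `` {c}) `` {n k})"
  shows "\<exists>X. X \<notin> BI \<and> (\<forall>Y. finite {k. infinite (((A k \<inter> Y) `` {c}) `` {n k})} \<longrightarrow> X \<inter> Y \<in> BI)"
proof -
  define X where "X = {c} \<times> (\<Union>k. {n k} \<times> (A k `` {c}) `` {n k})"
  have X_on: "(X `` {c}) `` {n k} = (A k `` {c}) `` {n k}" for k
    using n by (auto simp: X_def inj_eq)
  have X_off: "(X `` {c}) `` {m} = {}" if "m \<notin> range n" for m
    using that by (auto simp: X_def)
  have X_c: "X `` {m} = {}" if "m \<noteq> c" for m
    using that by (auto simp: X_def)
  have "X `` {c} \<notin> FinFin"
    using infinite_rows_along_inj[OF n, of "\<lambda>m. (X `` {c}) `` {m}"] X_on infinite_rows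
    by (simp add: FinFin_iff)
  then have "X \<notin> BI"
    unfolding BI_iff by blast
  moreover have "X \<inter> Y \<in> BI" if Y: "finite {k. infinite (((A k \<inter> Y) `` {c}) `` {n k})}" for Y
  proof -
    have "finite {m. infinite (((X \<inter> Y) `` {c}) `` {m})}"
    proof (rule finite_infinite_rows_along[OF Y])
      show "((X \<inter> Y) `` {c}) `` {n k} \<subseteq> ((A k \<inter> Y) `` {c}) `` {n k}" for k
        using X_on[of k] by auto
      show "((X \<inter> Y) `` {c}) `` {m} = {}" if "m \<notin> range n" for m
        using X_off[OF that] by auto
    qed
    then have "(X \<inter> Y) `` {m} \<in> FinFin" for m
      using X_c empty_in_FinFin by (cases "m = c") (auto simp: FinFin_iff Int_Image_singleton)
    moreover have "{m. infinite ((X \<inter> Y) `` {m})} \<subseteq> {c}"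
      using X_c by (auto simp: Int_Image_singleton)
    ultimately show ?thesis
      by (simp add: BI_iff finite_subset)
  qed
  ultimately show ?thesis
    by blast
qed

lemma unbounded_family_le_mad_BI_infinite_slices:
  fixes A :: "nat \<Rightarrow> (nat \<times> nat \<times> nat) set"
  assumes "mad_family BI \<A>" "inj A" "range A \<subseteq> \<A>"
    and "\<And>k. infinite {m. infinite (A k `` {m})}"
  shows "\<exists>F. unbounded_family F \<and> card_le F \<A>"
proof (rule unbounded_family_le_mad_family[where \<rho> = "\<lambda>Z m. Z `` {m}", OF assms(1-3)])
  show "finite {m. infinite (Z `` {m})}" if "Z \<in> BI" for Z
    using that by (simp add: BI_iff)
qed (use assms(4) BI_diagonal_slices in auto)

lemma unbounded_family_le_mad_BI_slice_not_FinFin: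
  fixes A :: "nat \<Rightarrow> (nat \<times> nat \<times> nat) set"
  assumes "mad_family BI \<A>" "inj A" "range A \<subseteq> \<A>"
    and "\<And>k. A k `` {c} \<notin> FinFin"
  shows "\<exists>F. unbounded_family F \<and> card_le F \<A>"
proof (rule unbounded_family_le_mad_family[where \<rho> = "\<lambda>Z j. (Z `` {c}) `` {j}", OF assms(1-3)])
  show "finite {j. infinite ((Z `` {c}) `` {j})}" if "Z \<in> BI" for Z
    using that by (simp add: BI_iff FinFin_iff)
  show "infinite {j. infinite ((A k `` {c}) `` {j})}" for k
    using assms(4) by (simp add: FinFin_iff)
qed (rule BI_diagonal_rows)

theorem mainTheorem2:
  fixes \<A> :: "(nat \<times> nat \<times> nat) set set"
  assumes "uncountable \<A>"
    and "mad_family BI \<A>"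
  shows "\<exists>F :: (nat \<Rightarrow> nat) set. unbounded_family F \<and> card_le F \<A>"
proof -
  let ?slices = "{A \<in> \<A>. infinite {m. infinite (A `` {m})}}"
  let ?rows = "\<lambda>c. {A \<in> \<A>. A `` {c} \<notin> FinFin}"
  have "\<A> \<subseteq> ?slices \<union> (\<Union>c. ?rows c)"
  proof
    fix A
    assume A: "A \<in> \<A>"
    then have "A \<notin> BI"
      using assms(2) by (simp add: mad_family_def ad_family_def)
    then show "A \<in> ?slices \<union> (\<Union>c. ?rows c)"
      using A by (auto simp: BI_iff)
  qed
  then have "\<not> countable (?slices \<union> (\<Union>c. ?rows c))"
    using assms(1) countable_subset by blast
  moreover have "countable (?slices \<union> (\<Union>c. ?rows c))"
    if "finite ?slices" "\<And>c. finite (?rows c)"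
    using that by (simp add: countable_finite)
  ultimately consider "infinite ?slices" | c where "infinite (?rows c)"
    by blast
  then show ?thesis
  proof cases
    case 1
    then obtain A :: "nat \<Rightarrow> _" where A: "inj A" "range A \<subseteq> ?slices"
      using infinite_countable_subset by blast
    show ?thesis
      using A(2) by (intro unbounded_family_le_mad_BI_infinite_slices[OF assms(2) A(1)]) auto
  next
    case (2 c)
    then obtain A :: "nat \<Rightarrow> _" where A: "inj A" "range A \<subseteq> ?rows c"
      using infinite_countable_subset by blast
    show ?thesis
      using A(2) by (intro unbounded_family_le_mad_BI_slice_not_FinFin[OF assms(2) A(1)]) auto
  qed
qed

end
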